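(* Let $\alpha=(\alpha_1,\dots,\alpha_k)$ be a composition of $r$ and let $m\ge k$. Then in $\mathcal{K}_+$, $$F_\alpha(u_1,u_2-u_1,\dots,u_m-u_{m-1})=\frac{q^{\mathrm{n}(\alpha)}}{[r]_q!}\,u_{[1+m-k,\,r+m-k]},$$ where $\mathrm{n}(\alpha)=\sum_{i=1}^k(i-1)\alpha_i$.
   Context: Let $\mathbf{k}$ be a field of characteristic zero and $q\in\mathbf{k}$ not a nontrivial root of unity; $[r]_q!=\prod_{i=1}^r(1+\dots+q^{i-1})$. The Klyachko algebra $\mathcal{K}$ is the commutative $\mathbf{k}$-algebra generated by $u_i$, $i\in\mathbb{Z}$, with relations $(q+1)u_i^2=qu_iu_{i-1}+u_iu_{i+1}$; $\mathcal{K}_+$ is its quotient by the ideal generated by the $u_i$, $i\le0$. $u_{[a,b]}=u_au_{a+1}\cdots u_b$. For a composition $\alpha$ of $r$ with $\mathrm{Set}(\alpha)=\{\alpha_1,\alpha_1+\alpha_2,\dots,\alpha_1+\dots+\alpha_{k-1}\}$, the fundamental quasisymmetric polynomial is $F_\alpha(x_1,\dots,x_m)=\sum x_{i_1}\cdots x_{i_r}$ over $1\le i_1\le\dots\le i_r\le m$ with $i_j<i_{j+1}$ whenever $j\in\mathrm{Set}(\alpha)$. *)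

theory Defs
  imports Main
begin

definition is_composition :: "nat list \<Rightarrow> nat \<Rightarrow> bool" where
  "is_composition \<alpha> r \<longleftrightarrow> (\<forall>a\<in>set \<alpha>. 0 < a) \<and> sum_list \<alpha> = r"

definition comp_set :: "nat list \<Rightarrow> nat set" where
  "comp_set \<alpha> = {sum_list (take j \<alpha>) | j. 1 \<le> j \<and> j < length \<alpha>}"

text \<open>Fundamental quasisymmetric polynomial F_alpha evaluated at x_1,...,x_m.
  Index sequences i_1..i_r are encoded as functions on {1..r}, zero elsewhere.\<close>
definition fundQSym :: "nat list \<Rightarrow> nat \<Rightarrow> (nat \<Rightarrow> 'a::comm_ring_1) \<Rightarrow> 'a" where
  "fundQSym \<alpha> m x =
     (let r = sum_list \<alpha> in
      \<Sum>f\<in>{f. (\<forall>j\<in>{1..r}. 1 \<le> f j \<and> f j \<le> m) \<and> (\<forall>j. j \<notin> {1..r} \<longrightarrow> f j = 0)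
              \<and> (\<forall>j\<in>{1..<r}. f j \<le> f (Suc j) \<and> (j \<in> comp_set \<alpha> \<longrightarrow> f j < f (Suc j)))}.
        \<Prod>j=1..r. x (f j))"

definition qfact :: "'k::field \<Rightarrow> nat \<Rightarrow> 'k" where
  "qfact q r = (\<Prod>i=1..r. \<Sum>j<i. q ^ j)"

definition comp_n :: "nat list \<Rightarrow> nat" where
  "comp_n \<alpha> = (\<Sum>i<length \<alpha>. i * \<alpha> ! i)"

definition u_interval :: "(int \<Rightarrow> 'a::comm_ring_1) \<Rightarrow> int \<Rightarrow> int \<Rightarrow> 'a" where
  "u_interval u a b = (\<Prod>i\<in>{a..b}. u i)"

end

theory Submission
  imports Defs
begin

(*
  Deleting the last entry of an index sequence gives the recursion
  F_alpha(x_1..x_m) = sum_p F_alpha'(x_1..x_p') x_p, where alpha' lowers the last part of alpha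
  and p' is p or p - 1. After clearing denominators one proves
  [r]_Q! F_alpha = Q^n(alpha) u_[1+m-k, r+m-k] by induction on r, in any commutative ring.
  The Klyachko relation reads u_i (u_(i+1) - u_i) = Q u_i (u_i - u_(i-1)), so inside a product
  u_[a,b] containing u_i consecutive increments differ by a factor Q. Hence [s+1]_Q times
  u_[a,a+s-1] (u_(a+d) - u_(a+d-1)) is Q^d times a telescoping sum, namely
  Q^d (u_[a,a+s] - u_[a-1,a+s-1]), and the sum over p telescopes once more.
*)

definition fund_seqs :: "nat set \<Rightarrow> nat \<Rightarrow> nat \<Rightarrow> (nat \<Rightarrow> nat) set" where
  "fund_seqs S r m = {f. (\<forall>j\<in>{1..r}. 1 \<le> f j \<and> f j \<le> m) \<and> (\<forall>j. j \<notin> {1..r} \<longrightarrow> f j = 0)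
     \<and> (\<forall>j\<in>{1..<r}. f j \<le> f (Suc j) \<and> (j \<in> S \<longrightarrow> f j < f (Suc j)))}"

definition fund_qsym :: "nat set \<Rightarrow> nat \<Rightarrow> nat \<Rightarrow> (nat \<Rightarrow> 'a::comm_ring_1) \<Rightarrow> 'a" where
  "fund_qsym S r m x = (\<Sum>f\<in>fund_seqs S r m. \<Prod>j=1..r. x (f j))"

lemma fundQSym_eq_fund_qsym: "fundQSym \<alpha> m x = fund_qsym (comp_set \<alpha>) (sum_list \<alpha>) m x"
  by (simp add: fundQSym_def fund_qsym_def fund_seqs_def Let_def)

lemma fund_seqs_0: "fund_seqs S 0 m = {\<lambda>j. 0}"
  unfolding fund_seqs_def by (auto intro!: ext)

lemma fund_qsym_0 [simp]: "fund_qsym S 0 m x = 1"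
  by (simp add: fund_qsym_def fund_seqs_0)

lemma fund_seqs_Suc_iff:
  "f \<in> fund_seqs S (Suc n) m \<longleftrightarrow>
     f (Suc n) \<in> {1..m} \<and> f(Suc n := 0) \<in> fund_seqs S n (if n \<in> S then f (Suc n) - 1 else f (Suc n))"
    (is "_ \<longleftrightarrow> _ \<and> _ \<in> fund_seqs S n ?b")
proof
  assume f: "f \<in> fund_seqs S (Suc n) m"
  then have mono: "f k \<le> f (Suc k)" if "k \<in> {1..<Suc n}" for k
    using that unfolding fund_seqs_def by blast
  have "f j \<le> f n" if "j \<in> {1..n}" for j
    using that by (intro lift_Suc_mono_le_ivl[of "{1..<Suc n}" f, OF mono]) auto
  moreover have "f n \<le> f (Suc n)" "n \<in> S \<Longrightarrow> 1 \<le> n \<Longrightarrow> f n < f (Suc n)"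
    using f unfolding fund_seqs_def by (cases "n = 0"; simp)+
  ultimately have "f j \<le> ?b" if "j \<in> {1..n}" for j
    using that by (fastforce simp: less_diff_conv2)
  with f show "f (Suc n) \<in> {1..m} \<and> f(Suc n := 0) \<in> fund_seqs S n ?b"
    unfolding fund_seqs_def by auto
next
  assume "f (Suc n) \<in> {1..m} \<and> f(Suc n := 0) \<in> fund_seqs S n ?b"
  then have last: "f (Suc n) \<in> {1..m}" and g: "f(Suc n := 0) \<in> fund_seqs S n ?b"
    by auto
  have zero: "f j = 0" if "j \<notin> {1..Suc n}" for j
  proof -
    have "j \<notin> {1..n}" "j \<noteq> Suc n" using that by auto
    moreover from g have "\<forall>j. j \<notin> {1..n} \<longrightarrow> (f(Suc n := 0)) j = 0"
      unfolding fund_seqs_def by blast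
    ultimately show ?thesis by auto
  qed
  have bounded: "\<forall>j\<in>{1..n}. 1 \<le> f j \<and> f j \<le> ?b"
    and mono: "\<forall>j\<in>{1..<n}. f j \<le> f (Suc j) \<and> (j \<in> S \<longrightarrow> f j < f (Suc j))"
    using g unfolding fund_seqs_def by auto
  have "f n \<le> f (Suc n) \<and> (n \<in> S \<longrightarrow> f n < f (Suc n))" if "1 \<le> n"
    using bounded[rule_format, of n] last that by (auto split: if_splits)
  moreover have "1 \<le> f j \<and> f j \<le> m" if "j \<in> {1..Suc n}" for j
  proof (cases "j = Suc n")
    case False
    then have "j \<in> {1..n}" using that by auto
    with bounded[rule_format, of j] last show ?thesis by (auto split: if_splits)
  qed (use last in auto)
  ultimately show "f \<in> fund_seqs S (Suc n) m"
    using mono unfolding fund_seqs_def by (auto simp: zero less_Suc_eq)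
qed

lemma fund_seqs_vanish: "f \<in> fund_seqs S n m \<Longrightarrow> n < j \<Longrightarrow> f j = 0"
  unfolding fund_seqs_def by simp

lemma bij_betw_fund_seqs_Suc:
  "bij_betw (\<lambda>(p, g). g(Suc n := p))
     (SIGMA p:{1..m}. fund_seqs S n (if n \<in> S then p - 1 else p)) (fund_seqs S (Suc n) m)"
  by (rule bij_betw_byWitness[where f' = "\<lambda>f. (f (Suc n), f(Suc n := 0))"])
    (auto simp: fund_seqs_Suc_iff fund_seqs_vanish fun_upd_idem)

lemma finite_fund_seqs: "finite (fund_seqs S n m)"
proof (induction n arbitrary: m)
  case 0
  show ?case by (simp add: fund_seqs_0)
next
  case (Suc n)
  show ?case
    by (subst bij_betw_imp_surj_on[OF bij_betw_fund_seqs_Suc, symmetric]) (auto intro: Suc.IH)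
qed

lemma fund_qsym_Suc:
  "fund_qsym S (Suc n) m x = (\<Sum>p=1..m. fund_qsym S n (if n \<in> S then p - 1 else p) x * x p)"
proof -
  have "fund_qsym S (Suc n) m x = (\<Sum>(p, g)\<in>(SIGMA p:{1..m}. fund_seqs S n (if n \<in> S then p - 1 else p)).
      \<Prod>j=1..Suc n. x ((g(Suc n := p)) j))"
    unfolding fund_qsym_def
    by (simp only: sum.reindex_bij_betw[OF bij_betw_fund_seqs_Suc, symmetric] case_prod_unfold)
  also have "\<dots> = (\<Sum>p=1..m. \<Sum>g\<in>fund_seqs S n (if n \<in> S then p - 1 else p). (\<Prod>j=1..n. x (g j)) * x p)"
    by (subst sum.Sigma[symmetric]) (auto simp: finite_fund_seqs intro!: sum.cong prod.cong)
  finally show ?thesis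
    unfolding fund_qsym_def by (simp add: sum_distrib_right)
qed

lemma fund_qsym_cong:
  "(\<And>j. j \<in> {1..<n} \<Longrightarrow> j \<in> S \<longleftrightarrow> j \<in> S') \<Longrightarrow> fund_qsym S n m x = fund_qsym S' n m x"
  unfolding fund_qsym_def fund_seqs_def by (intro sum.cong Collect_cong refl) blast

lemma comp_set_snoc: "comp_set (\<beta> @ [a]) = {sum_list (take j \<beta>) | j. 1 \<le> j \<and> j \<le> length \<beta>}"
  unfolding comp_set_def by (rule Collect_cong, rule ex_cong1) (auto simp: less_Suc_eq_le)

lemma comp_set_snoc_below:
  assumes "j < sum_list \<beta>"
  shows "j \<in> comp_set (\<beta> @ [a]) \<longleftrightarrow> j \<in> comp_set \<beta>"
proof
  assume "j \<in> comp_set (\<beta> @ [a])"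
  then obtain i where i: "j = sum_list (take i \<beta>)" "1 \<le> i" "i \<le> length \<beta>"
    by (auto simp: comp_set_snoc)
  with assms have "i \<noteq> length \<beta>" by auto
  with i show "j \<in> comp_set \<beta>" by (auto simp: comp_set_def)
qed (unfold comp_set_snoc, auto simp: comp_set_def)

lemma sum_list_take_le: "sum_list (take j \<beta>) \<le> (sum_list \<beta> :: nat)"
  by (metis append_take_drop_id sum_list_append le_add1)

lemma length_le_sum_list: "\<forall>a\<in>set \<beta>. 0 < a \<Longrightarrow> length \<beta> \<le> (sum_list \<beta> :: nat)"
  by (induction \<beta>) auto

lemma comp_n_snoc: "comp_n (\<beta> @ [a]) = comp_n \<beta> + length \<beta> * a"
  unfolding comp_n_def by (simp add: nth_append)

lemma length_le_comp_n: "\<forall>a\<in>set \<alpha>. 0 < a \<Longrightarrow> length \<alpha> - 1 \<le> comp_n \<alpha>"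
  by (cases \<alpha> rule: rev_exhaust) (auto simp: comp_n_snoc trans_le_add2)

text \<open>The witness \<open>\<alpha>'\<close> is \<open>\<alpha>\<close> with its last part lowered by one (and dropped if it becomes 0).\<close>

lemma fund_qsym_Suc_summand_composition:
  assumes comp: "is_composition \<alpha> (Suc n)" and p: "1 \<le> p"
  obtains \<alpha>' p' where "is_composition \<alpha>' n"
    and "comp_n \<alpha> = comp_n \<alpha>' + (length \<alpha> - 1)"
    and "int p' - int (length \<alpha>') = int p - int (length \<alpha>)"
    and "fund_qsym (comp_set \<alpha>) n (if n \<in> comp_set \<alpha> then p - 1 else p) x = fund_qsym (comp_set \<alpha>') n p' x"
proof -
  have pos: "\<forall>a\<in>set \<alpha>. 0 < a" and sum: "sum_list \<alpha> = Suc n"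
    using comp unfolding is_composition_def by auto
  then obtain \<beta> a where \<alpha>: "\<alpha> = \<beta> @ [a]"
    by (metis rev_exhaust sum_list.Nil nat.distinct(1))
  have pos\<beta>: "\<forall>b\<in>set \<beta>. 0 < b" and "0 < a" and sum\<beta>: "sum_list \<beta> + a = Suc n"
    using pos sum \<alpha> by auto
  consider "a = 1" "\<beta> = []" | "2 \<le> a" | "a = 1" "\<beta> \<noteq> []"
    using \<open>0 < a\<close> by linarith
  then show ?thesis
  proof cases
    case 1
    with sum\<beta> have "n = 0" by simp
    show ?thesis
      by (rule that[of "[]" "p - 1"]) (use 1 \<alpha> p \<open>n = 0\<close> in \<open>auto simp: is_composition_def comp_n_def\<close>)
  next
    case 2
    have "n \<notin> comp_set \<alpha>"
    proof
      assume "n \<in> comp_set \<alpha>"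
      then obtain j where "n = sum_list (take j \<beta>)" unfolding \<alpha> comp_set_snoc by blast
      with sum_list_take_le[of j \<beta>] sum\<beta> 2 show False by linarith
    qed
    moreover have "comp_set \<alpha> = comp_set (\<beta> @ [a - 1])"
      unfolding \<alpha> comp_set_snoc ..
    moreover have "length \<beta> * a = length \<beta> * (a - 1) + length \<beta>"
      using 2 by (cases a) auto
    ultimately show ?thesis
      by (intro that[of "\<beta> @ [a - 1]" p])
        (use pos\<beta> sum\<beta> 2 in \<open>auto simp: \<alpha> is_composition_def comp_n_snoc\<close>)
  next
    case 3
    have "n \<in> comp_set \<alpha>"
      using 3 sum\<beta> unfolding \<alpha> comp_set_snoc by (auto intro!: exI[of _ "length \<beta>"] simp: Suc_le_eq)
    moreover have "fund_qsym (comp_set \<alpha>) n (p - 1) x = fund_qsym (comp_set \<beta>) n (p - 1) x"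
      using 3 sum\<beta> by (intro fund_qsym_cong) (simp add: \<alpha> comp_set_snoc_below)
    ultimately show ?thesis
      by (intro that[of \<beta> "p - 1"])
        (use pos\<beta> sum\<beta> 3 p in \<open>auto simp: \<alpha> is_composition_def comp_n_snoc\<close>)
  qed
qed

definition q_int :: "'a::comm_semiring_1 \<Rightarrow> nat \<Rightarrow> 'a" where
  "q_int Q n = (\<Sum>j<n. Q ^ j)"

definition q_factorial :: "'a::comm_semiring_1 \<Rightarrow> nat \<Rightarrow> 'a" where
  "q_factorial Q r = (\<Prod>i=1..r. q_int Q i)"

lemma q_factorial_Suc: "q_factorial Q (Suc n) = q_factorial Q n * q_int Q (Suc n)"
  by (simp add: q_factorial_def)

lemma qfact_eq_q_factorial: "qfact q r = q_factorial q r"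
  by (simp add: qfact_def q_factorial_def q_int_def)

lemma q_int_nonzero:
  fixes q :: "'k::field_char_0"
  assumes not_root: "\<forall>n::nat. 1 \<le> n \<and> q ^ n = 1 \<longrightarrow> q = 1" and "1 \<le> n"
  shows "q_int q n \<noteq> 0"
proof
  assume zero: "q_int q n = 0"
  then have "q ^ n = 1"
    using one_diff_power_eq[of q n] by (simp add: q_int_def)
  with not_root \<open>1 \<le> n\<close> have "q = 1" by blast
  with zero \<open>1 \<le> n\<close> show False by (simp add: q_int_def)
qed

lemma q_factorial_nonzero:
  fixes q :: "'k::field_char_0"
  assumes "\<forall>n::nat. 1 \<le> n \<and> q ^ n = 1 \<longrightarrow> q = 1"
  shows "q_factorial q r \<noteq> 0"
  using q_int_nonzero[OF assms] by (simp add: q_factorial_def)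

lemma u_interval_snoc: "a \<le> b + 1 \<Longrightarrow> u_interval u a (b + 1) = u_interval u a b * u (b + 1)"
proof -
  assume "a \<le> b + 1"
  then have "{a..b + 1} = insert (b + 1) {a..b}" by auto
  then show ?thesis unfolding u_interval_def by (simp add: mult.commute)
qed

lemma u_interval_Cons: "a \<le> b + 1 \<Longrightarrow> u_interval u (a - 1) b = u (a - 1) * u_interval u a b"
proof -
  assume "a \<le> b + 1"
  then have "{a - 1..b} = insert (a - 1) {a..b}" by auto
  then show ?thesis unfolding u_interval_def by simp
qed

lemma u_interval_eq_0: "i \<in> {a..b} \<Longrightarrow> u i = 0 \<Longrightarrow> u_interval u a b = 0"
  unfolding u_interval_def by (rule prod_zero) auto

lemma u_interval_factor: "i \<in> {a..b} \<Longrightarrow> u_interval u a b = u i * prod u ({a..b} - {i})"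
  unfolding u_interval_def by (rule prod.remove) auto

text \<open>The relations of the Klyachko algebra with q replaced by an element Q of an arbitrary
  commutative ring; \<open>klyachko_plus\<close> adds those of its quotient K_+.\<close>

locale klyachko =
  fixes Q :: "'a::comm_ring_1" and u :: "int \<Rightarrow> 'a"
  assumes klyachko_rel: "(Q + 1) * u i ^ 2 = Q * u i * u (i - 1) + u i * u (i + 1)"
begin

abbreviation increment :: "nat \<Rightarrow> 'a" where
  "increment p \<equiv> u (int p) - u (int p - 1)"

lemma increment_Suc: "u i * (u (i + 1) - u i) = Q * (u i * (u i - u (i - 1)))"
  using klyachko_rel[of i] by (simp add: algebra_simps power2_eq_square)

lemma u_interval_increment_Suc:
  assumes "i \<in> {a..b}"
  shows "u_interval u a b * (u (i + 1) - u i) = Q * (u_interval u a b * (u i - u (i - 1)))"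
proof -
  define R where "R = prod u ({a..b} - {i})"
  have "u_interval u a b * (u (i + 1) - u i) = R * (u i * (u (i + 1) - u i))"
    unfolding u_interval_factor[OF assms] R_def by (simp only: ac_simps)
  also have "\<dots> = Q * (R * (u i * (u i - u (i - 1))))"
    unfolding increment_Suc by (rule mult.left_commute)
  also have "R * (u i * (u i - u (i - 1))) = u_interval u a b * (u i - u (i - 1))"
    unfolding u_interval_factor[OF assms] R_def by (simp only: ac_simps)
  finally show ?thesis .
qed

lemma u_interval_increment_power:
  assumes "a + int j \<le> b + 1"
  shows "u_interval u a b * (u (a + int j) - u (a + int j - 1)) = Q ^ j * (u_interval u a b * (u a - u (a - 1)))"
  using assms
proof (induction j)
  case (Suc j)
  then have "a + int j \<in> {a..b}" by simp
  moreover have "a + int (Suc j) = a + int j + 1" "a + int (Suc j) - 1 = a + int j" by simp_all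
  ultimately show ?case
    using Suc by (simp only: u_interval_increment_Suc) (simp add: mult.assoc)
qed simp

lemma q_int_mult_u_interval_increment:
  assumes "d \<le> s"
  shows "q_int Q (Suc s) * (u_interval u a (a + int s - 1) * (u (a + int d) - u (a + int d - 1)))
    = Q ^ d * (u_interval u a (a + int s) - u_interval u (a - 1) (a + int s - 1))"
proof -
  define P where "P = u_interval u a (a + int s - 1)"
  have power: "P * (u (a + int j) - u (a + int j - 1)) = Q ^ j * (P * (u a - u (a - 1)))" if "j \<le> s" for j
    unfolding P_def using that by (intro u_interval_increment_power) simp
  have "q_int Q (Suc s) * (P * (u (a + int d) - u (a + int d - 1)))
      = Q ^ d * (q_int Q (Suc s) * (P * (u a - u (a - 1))))"
    unfolding power[OF assms] by (rule mult.left_commute)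
  also have "\<dots> = Q ^ d * (\<Sum>j<Suc s. Q ^ j * (P * (u a - u (a - 1))))"
    by (simp only: q_int_def sum_distrib_right)
  also have "(\<Sum>j<Suc s. Q ^ j * (P * (u a - u (a - 1))))
      = P * (\<Sum>j<Suc s. u (a + int (Suc j) - 1) - u (a + int j - 1))"
    unfolding sum_distrib_left by (rule sum.cong) (simp_all add: power)
  also have "\<dots> = P * u (a + int s) - u (a - 1) * P"
    by (simp only: sum_lessThan_telescope[of "\<lambda>j. u (a + int j - 1)"]) (simp add: algebra_simps)
  also have "P * u (a + int s) = u_interval u a (a + int s)"
    unfolding P_def using u_interval_snoc[of a "a + int s - 1" u] by simp
  also have "u (a - 1) * P = u_interval u (a - 1) (a + int s - 1)"
    unfolding P_def using u_interval_Cons[of a "a + int s - 1" u] by simp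
  finally show ?thesis unfolding P_def .
qed

end

locale klyachko_plus = klyachko +
  assumes vanish: "i \<le> 0 \<Longrightarrow> u i = 0"
begin

lemma q_int_mult_sum_u_interval_increments:
  assumes "d \<le> s"
  shows "q_int Q (Suc s) * (\<Sum>p=1..m. u_interval u (int p - int d) (int p - int d + int s - 1) * increment p)
    = Q ^ d * u_interval u (int m - int d) (int m - int d + int s)"
proof (induction m)
  case 0
  have "u_interval u (- int d) (- int d + int s) = 0"
    using assms by (intro u_interval_eq_0[of 0]) (simp_all add: vanish)
  then show ?case by simp
next
  case (Suc m)
  define a where "a = int (Suc m) - int d"
  have "a + int d = int (Suc m)" "a - 1 = int m - int d" "a - 1 + int s = a + int s - 1"
    unfolding a_def by simp_all
  then have "q_int Q (Suc s) * (\<Sum>p=1..Suc m. u_interval u (int p - int d) (int p - int d + int s - 1) * increment p)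
      = Q ^ d * u_interval u (a - 1) (a + int s - 1)
        + q_int Q (Suc s) * (u_interval u a (a + int s - 1) * (u (a + int d) - u (a + int d - 1)))"
    using Suc by (simp add: distrib_left a_def) (simp add: algebra_simps)
  also have "\<dots> = Q ^ d * u_interval u a (a + int s)"
    unfolding q_int_mult_u_interval_increment[OF assms] by (simp add: algebra_simps)
  finally show ?case by (simp add: a_def)
qed

lemma q_factorial_mult_fund_qsym:
  assumes "is_composition \<alpha> r"
  shows "q_factorial Q r * fund_qsym (comp_set \<alpha>) r m increment
    = Q ^ comp_n \<alpha> * u_interval u (1 + int m - int (length \<alpha>)) (int r + int m - int (length \<alpha>))"
  using assms
proof (induction r arbitrary: \<alpha> m)
  case 0
  then have "\<alpha> = []" by (cases \<alpha>) (auto simp: is_composition_def)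
  then show ?case by (simp add: q_factorial_def comp_n_def u_interval_def)
next
  case (Suc n)
  define k where "k = length \<alpha>"
  define e where "e = comp_n \<alpha> - (k - 1)"
  have "\<alpha> \<noteq> []" "k \<le> Suc n"
    using Suc.prems length_le_sum_list[of \<alpha>] unfolding k_def is_composition_def by auto
  then have "1 \<le> k" unfolding k_def by (simp add: Suc_le_eq)
  have summand: "q_factorial Q n * fund_qsym (comp_set \<alpha>) n (if n \<in> comp_set \<alpha> then p - 1 else p) increment
      = Q ^ e * u_interval u (int p - int (k - 1)) (int p - int (k - 1) + int n - 1)" if "p \<in> {1..m}" for p
  proof -
    from that have "1 \<le> p" by simp
    obtain \<alpha>' p' where comp': "is_composition \<alpha>' n"
      and n': "comp_n \<alpha> = comp_n \<alpha>' + (k - 1)"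
      and p': "int p' - int (length \<alpha>') = int p - int k"
      and F': "fund_qsym (comp_set \<alpha>) n (if n \<in> comp_set \<alpha> then p - 1 else p) increment
        = fund_qsym (comp_set \<alpha>') n p' increment"
      unfolding k_def by (rule fund_qsym_Suc_summand_composition[OF Suc.prems \<open>1 \<le> p\<close>])
    have "1 + int p' - int (length \<alpha>') = int p - int (k - 1)"
      "int n + int p' - int (length \<alpha>') = int p - int (k - 1) + int n - 1"
      using p' \<open>1 \<le> k\<close> by simp_all
    with Suc.IH[OF comp', of p'] show ?thesis
      unfolding F' e_def n' by simp
  qed
  have "q_factorial Q (Suc n) * fund_qsym (comp_set \<alpha>) (Suc n) m increment
      = q_int Q (Suc n) * (\<Sum>p=1..m. (q_factorial Q n
          * fund_qsym (comp_set \<alpha>) n (if n \<in> comp_set \<alpha> then p - 1 else p) increment)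
          * increment p)"
    unfolding q_factorial_Suc fund_qsym_Suc sum_distrib_left by (simp only: ac_simps)
  also have "\<dots> = q_int Q (Suc n) * (\<Sum>p=1..m. Q ^ e *
          (u_interval u (int p - int (k - 1)) (int p - int (k - 1) + int n - 1) * increment p))"
    by (intro arg_cong[where f = "(*) _"] sum.cong refl) (simp only: summand mult.assoc)
  also have "\<dots> = Q ^ e * Q ^ (k - 1) * u_interval u (int m - int (k - 1)) (int m - int (k - 1) + int n)"
    using q_int_mult_sum_u_interval_increments[of "k - 1" n m] \<open>k \<le> Suc n\<close>
    by (simp add: sum_distrib_left[symmetric] ac_simps)
  also have "\<dots> = Q ^ comp_n \<alpha> * u_interval u (1 + int m - int k) (int (Suc n) + int m - int k)"
    using length_le_comp_n[of \<alpha>] Suc.prems \<open>1 \<le> k\<close>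
    by (simp add: e_def k_def is_composition_def power_add[symmetric] algebra_simps)
  finally show ?case unfolding k_def .
qed

end

locale unital_ring_hom =
  fixes \<phi> :: "'k::comm_ring_1 \<Rightarrow> 'a::comm_ring_1"
  assumes hom_one: "\<phi> 1 = 1"
    and hom_add: "\<phi> (a + b) = \<phi> a + \<phi> b"
    and hom_mult: "\<phi> (a * b) = \<phi> a * \<phi> b"
begin

lemma hom_zero: "\<phi> 0 = 0"
  using hom_add[of 0 0] by simp

lemma hom_power: "\<phi> (a ^ n) = \<phi> a ^ n"
  by (induction n) (simp_all add: hom_one hom_mult)

lemma hom_sum: "\<phi> (sum f A) = (\<Sum>x\<in>A. \<phi> (f x))"
  using sum_comp_morphism[of \<phi> f A] by (simp add: hom_zero hom_add comp_def)

lemma hom_prod: "\<phi> (prod f A) = (\<Prod>x\<in>A. \<phi> (f x))"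
  by (induction A rule: infinite_finite_induct) (simp_all add: hom_one hom_mult)

lemma hom_q_factorial: "\<phi> (q_factorial q r) = q_factorial (\<phi> q) r"
  by (simp add: q_factorial_def q_int_def hom_prod hom_sum hom_power)

end

theorem mainTheorem12:
  fixes q :: "'k::field_char_0"
    and \<phi> :: "'k \<Rightarrow> 'a::comm_ring_1"
    and u :: "int \<Rightarrow> 'a"
    and \<alpha> :: "nat list" and r m :: nat
  assumes q_not_root: "\<forall>n::nat. 1 \<le> n \<and> q ^ n = 1 \<longrightarrow> q = 1"
    and hom1: "\<phi> 1 = 1"
    and hom_add: "\<forall>a b. \<phi> (a + b) = \<phi> a + \<phi> b"
    and hom_mult: "\<forall>a b. \<phi> (a * b) = \<phi> a * \<phi> b"
    and klyachko: "\<forall>i. \<phi> (q + 1) * u i ^ 2 = \<phi> q * u i * u (i - 1) + u i * u (i + 1)"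
    and plus: "\<forall>i\<le>0. u i = 0"
    and comp: "is_composition \<alpha> r"
    and mk: "length \<alpha> \<le> m"
  shows "fundQSym \<alpha> m (\<lambda>j. if j = 1 then u 1 else u (int j) - u (int j - 1))
         = \<phi> (q ^ comp_n \<alpha> / qfact q r)
           * u_interval u (1 + int m - int (length \<alpha>)) (int r + int m - int (length \<alpha>))"
proof -
  interpret \<phi>: unital_ring_hom \<phi>
    using hom1 hom_add hom_mult by unfold_locales auto
  interpret klyachko_plus "\<phi> q" u
    using klyachko plus by unfold_locales (simp_all add: \<phi>.hom_add \<phi>.hom_one)
  define F where "F = fundQSym \<alpha> m (\<lambda>j. if j = 1 then u 1 else u (int j) - u (int j - 1))"
  define U where "U = u_interval u (1 + int m - int (length \<alpha>)) (int r + int m - int (length \<alpha>))"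
  have "(\<lambda>j. if j = 1 then u 1 else u (int j) - u (int j - 1)) = increment"
    using plus by auto
  with q_factorial_mult_fund_qsym[OF comp, of m] comp
  have "\<phi> (qfact q r) * F = \<phi> (q ^ comp_n \<alpha>) * U"
    by (simp add: F_def U_def fundQSym_eq_fund_qsym is_composition_def qfact_eq_q_factorial
        \<phi>.hom_q_factorial \<phi>.hom_power)
  moreover have "\<phi> (1 / qfact q r) * \<phi> (qfact q r) = 1"
    using q_factorial_nonzero[OF q_not_root] by (simp add: qfact_eq_q_factorial \<phi>.hom_mult[symmetric] \<phi>.hom_one)
  ultimately have "F = \<phi> (1 / qfact q r) * \<phi> (q ^ comp_n \<alpha>) * U"
    by (metis mult.assoc mult_1)
  then show ?thesis
    by (simp add: F_def U_def \<phi>.hom_mult[symmetric])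
qed

end
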